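(* Let $h:\mathbb{R}^n\to\mathbb{R}$ be continuously differentiable and convex with $h^*:=\inf h$ and $\mathcal{X}^*:=\{x:h(x)=h^*\}\neq\emptyset$, and suppose $h$ satisfies the KL inequality. Then: (a) for every $\bar x\in\mathbb{R}^n$ there exist $\rho,\delta>0$ and $\vartheta\in(0,1)$ with $(h(x)-h^* )^\vartheta\le\rho\|\nabla h(x)\|$ for all $x\in B(\bar x;\delta)$; (b) for every compact set $S\subseteq\mathbb{R}^n$ there exist $\vartheta_S\in(0,1)$ and $\rho_S>0$ with $(h(x)-h^* )^{\vartheta_S}\le\rho_S\|\nabla h(x)\|$ for all $x\in S$.
   Context: $h$ satisfies the KL (Kurdyka–Łojasiewicz) inequality if for every $x^*\in\mathcal{X}^*$ there exist $\rho,\delta>0$ and $\vartheta\in(0,1)$ such that $(h(x)-h^* )^\vartheta\le\rho\|\nabla h(x)\|$ for all $x\in B(x^*;\delta)$. *)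

theory Defs
  imports "HOL-Analysis.Analysis"
begin

definition opt_val :: "('a \<Rightarrow> real) \<Rightarrow> real" where
  "opt_val h = (INF x. h x)"

definition opt_set :: "('a \<Rightarrow> real) \<Rightarrow> 'a set" where
  "opt_set h = {x. h x = opt_val h}"

definition KL_ineq :: "('a::real_normed_vector \<Rightarrow> real) \<Rightarrow> ('a \<Rightarrow> 'a) \<Rightarrow> bool" where
  "KL_ineq h grad \<longleftrightarrow>
     (\<forall>xs \<in> opt_set h. \<exists>\<rho>>0. \<exists>\<delta>>0. \<exists>\<theta>. 0 < \<theta> \<and> \<theta> < 1 \<and>
        (\<forall>x \<in> ball xs \<delta>. (h x - opt_val h) powr \<theta> \<le> \<rho> * norm (grad x)))"

end

theory Submission
  imports Defs
begin

text \<open>A point where the gradient vanishes is a global minimiser of the convex function, so the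
  KL hypothesis applies there. Near a point with nonzero gradient, \<open>\<parallel>\<nabla>h\<parallel>\<close> is bounded away
  from zero while \<open>h\<close> is bounded, so every exponent works. On a compact set finitely many such
  balls suffice: taking the largest exponent and using \<open>t\<^sup>b \<le> max 1 M \<cdot> t\<^sup>a\<close> for \<open>0 \<le> t \<le> M\<close>,
  \<open>a \<le> b \<le> a + 1\<close>, the local constants merge into uniform ones.\<close>

text \<open>Real \<^const>\<open>powr\<close> is even in its base, so no sign condition on \<open>f\<close> is needed below.
  This matters: \<^const>\<open>opt_val\<close> is an infimum, which need not bound \<open>h\<close> from below when the
  range of \<open>h\<close> is unbounded.\<close>

lemma powr_abs: "(x::real) powr a = \<bar>x\<bar> powr a"
  by (simp add: powr_def ln_real_def)

lemma powr_le_max_mult_powr: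
  fixes t M a b :: real
  assumes "\<bar>t\<bar> \<le> M" "0 \<le> a" "a \<le> b" "b \<le> a + 1"
  shows "t powr b \<le> max 1 M * t powr a"
proof (cases "\<bar>t\<bar> \<le> 1")
  case True
  then have "t powr b \<le> t powr a"
    using assms by (subst (1 2) powr_abs, cases "t = 0") (auto intro: powr_mono')
  also have "\<dots> \<le> max 1 M * t powr a" by (simp add: mult_le_cancel_right1)
  finally show ?thesis .
next
  case False
  have "t powr b = t powr a * \<bar>t\<bar> powr (b - a)"
    by (simp add: powr_abs[of t] powr_add[symmetric])
  also have "\<dots> \<le> t powr a * max 1 M"
  proof (rule mult_left_mono)
    have "\<bar>t\<bar> powr (b - a) \<le> \<bar>t\<bar> powr 1"
      using False assms by (intro powr_mono) auto
    then show "\<bar>t\<bar> powr (b - a) \<le> max 1 M" using assms by simp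
  qed simp
  finally show ?thesis by (simp add: mult.commute)
qed

definition KL_at :: "('a::metric_space \<Rightarrow> real) \<Rightarrow> ('a \<Rightarrow> real) \<Rightarrow> 'a \<Rightarrow> bool" where
  "KL_at f g x \<longleftrightarrow> (\<exists>\<rho>>0. \<exists>\<delta>>0. \<exists>\<theta>. 0 < \<theta> \<and> \<theta> < 1 \<and>
     (\<forall>y \<in> ball x \<delta>. f y powr \<theta> \<le> \<rho> * g y))"

lemma KL_ineq_iff_KL_at:
  "KL_ineq h grad \<longleftrightarrow> (\<forall>x \<in> opt_set h. KL_at (\<lambda>y. h y - opt_val h) (\<lambda>y. norm (grad y)) x)"
  by (simp add: KL_ineq_def KL_at_def)

lemma KL_at_if_isCont_nonzero:
  fixes f g :: "'a::metric_space \<Rightarrow> real"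
  assumes "isCont f x" "isCont g x" "0 < g x"
  shows "KL_at f g x"
proof -
  obtain \<delta>1 where "\<delta>1 > 0" and \<delta>1: "\<And>y. dist y x < \<delta>1 \<Longrightarrow> dist (f y) (f x) < 1"
    using assms(1) unfolding continuous_at_eps_delta by (meson zero_less_one)
  obtain \<delta>2 where "\<delta>2 > 0" and \<delta>2: "\<And>y. dist y x < \<delta>2 \<Longrightarrow> dist (g y) (g x) < g x / 2"
    using assms(2,3) unfolding continuous_at_eps_delta by (meson half_gt_zero)
  define M where "M = max 1 (\<bar>f x\<bar> + 1)"
  have bound: "f y powr (1/2) \<le> 2 * M / g x * g y" if "y \<in> ball x (min \<delta>1 \<delta>2)" for y
  proof -
    from that have "dist y x < \<delta>1" "dist y x < \<delta>2" by (auto simp: dist_commute)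
    then have "dist (f y) (f x) < 1" "dist (g y) (g x) < g x / 2" using \<delta>1 \<delta>2 by blast+
    then have "\<bar>f y\<bar> \<le> \<bar>f x\<bar> + 1" and gy: "g x / 2 \<le> g y"
      unfolding dist_real_def by linarith+
    then have "f y powr (1/2) \<le> M * f y powr 0"
      unfolding M_def by (intro powr_le_max_mult_powr) auto
    also have "\<dots> \<le> M" by (simp add: M_def)
    also have "\<dots> = 2 * M / g x * (g x / 2)" using assms(3) by simp
    also have "\<dots> \<le> 2 * M / g x * g y"
      using gy assms(3) by (intro mult_left_mono) (auto simp: M_def)
    finally show ?thesis .
  qed
  show ?thesis
    unfolding KL_at_def
  proof (intro exI conjI ballI)
    show "2 * M / g x > 0" using assms(3) by (simp add: M_def)
    show "min \<delta>1 \<delta>2 > 0" using \<open>\<delta>1 > 0\<close> \<open>\<delta>2 > 0\<close> by simp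
    show "(0::real) < 1/2" "(1/2::real) < 1" by simp_all
  qed (fact bound)
qed

lemma KL_uniform_on_compact:
  fixes f g :: "'a::metric_space \<Rightarrow> real"
  assumes "compact S" "continuous_on S f" "\<forall>x \<in> S. KL_at f g x"
  shows "\<exists>\<theta> \<rho>. 0 < \<theta> \<and> \<theta> < 1 \<and> \<rho> > 0 \<and> (\<forall>x \<in> S. f x powr \<theta> \<le> \<rho> * g x)"
proof -
  obtain R D T where RDT: "\<And>x. x \<in> S \<Longrightarrow> R x > 0 \<and> D x > 0 \<and> 0 < T x \<and> T x < 1 \<and>
      (\<forall>y \<in> ball x (D x). f y powr T x \<le> R x * g y)"
    using assms(3) unfolding KL_at_def by metis
  obtain F where F: "F \<subseteq> S" "finite F" "S \<subseteq> (\<Union>x\<in>F. ball x (D x))"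
  proof (rule compactE_image[OF assms(1)])
    show "S \<subseteq> (\<Union>x\<in>S. ball x (D x))" using RDT by force
  qed auto
  obtain M where M: "\<And>x. x \<in> S \<Longrightarrow> \<bar>f x\<bar> \<le> M"
    using compact_imp_bounded[OF compact_continuous_image[OF assms(2,1)]]
    unfolding bounded_iff by auto
  define \<theta> where "\<theta> = Max (insert (1/2) (T ` F))"
  define \<rho> where "\<rho> = max 1 M * Max (insert 1 (R ` F))"
  have "0 < \<theta>" using F(2) by (simp add: \<theta>_def Max_gr_iff)
  moreover have "\<theta> < 1" using F(1,2) RDT by (auto simp: \<theta>_def)
  moreover have "\<rho> > 0" unfolding \<rho>_def using F(2) by (intro mult_pos_pos) (auto simp: Max_gr_iff)
  moreover have "f x powr \<theta> \<le> \<rho> * g x" if "x \<in> S" for x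
  proof -
    obtain z where z: "z \<in> F" "x \<in> ball z (D z)" using F(3) \<open>x \<in> S\<close> by auto
    have Rz: "R z > 0" and fz: "f x powr T z \<le> R z * g x" using RDT z F(1) by auto
    have "0 \<le> R z * g x" using fz powr_ge_zero order_trans by blast
    with Rz have "0 \<le> g x" by (simp add: zero_le_mult_iff)
    have "T z \<le> \<theta>" using z F(2) by (simp add: \<theta>_def)
    then have "f x powr \<theta> \<le> max 1 M * f x powr T z"
      using M[OF that] RDT[of z] z F(1) \<open>\<theta> < 1\<close> by (intro powr_le_max_mult_powr) auto
    also have "\<dots> \<le> max 1 M * (R z * g x)" using fz by (simp add: mult_left_mono)
    also have "\<dots> \<le> \<rho> * g x"
      unfolding \<rho>_def mult.assoc using z F(2) \<open>0 \<le> g x\<close>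
      by (intro mult_left_mono mult_right_mono) auto
    finally show ?thesis .
  qed
  ultimately show ?thesis by blast
qed

lemma convex_on_line:
  assumes "convex_on UNIV h"
  shows "convex_on UNIV (\<lambda>t::real. h (x + t *\<^sub>R v))"
  unfolding convex_on_def
proof (intro conjI ballI allI impI)
  fix s t a b :: real
  assume "0 \<le> a" "0 \<le> b" "a + b = 1"
  then have "x + (a * s + b * t) *\<^sub>R v = a *\<^sub>R (x + s *\<^sub>R v) + b *\<^sub>R (x + t *\<^sub>R v)"
    by (simp add: algebra_simps flip: scaleR_add_left)
  then show "h (x + (a *\<^sub>R s + b *\<^sub>R t) *\<^sub>R v) \<le> a * h (x + s *\<^sub>R v) + b * h (x + t *\<^sub>R v)"
    using assms \<open>0 \<le> a\<close> \<open>0 \<le> b\<close> \<open>a + b = 1\<close> by (simp add: convex_on_def)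
qed simp

lemma convex_on_gradient_ineq:
  fixes h :: "'a::real_inner \<Rightarrow> real"
  assumes "convex_on UNIV h" "GDERIV h x :> D"
  shows "h x + D \<bullet> (y - x) \<le> h y"
proof -
  have line: "((\<lambda>t. x + t *\<^sub>R (y - x)) has_derivative (\<lambda>t. t *\<^sub>R (y - x))) (at 0)"
    by (auto intro!: derivative_eq_intros)
  have h_deriv: "(h has_derivative (\<lambda>v. v \<bullet> D)) (at (x + 0 *\<^sub>R (y - x)))"
    using assms(2) by (simp add: gderiv_def)
  have "((\<lambda>t. h (x + t *\<^sub>R (y - x))) has_derivative (\<lambda>t. (t *\<^sub>R (y - x)) \<bullet> D)) (at 0)"
    by (rule has_derivative_compose[OF line h_deriv])
  then have "((\<lambda>t. h (x + t *\<^sub>R (y - x))) has_real_derivative D \<bullet> (y - x)) (at 0)"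
    by (simp add: has_field_derivative_def inner_commute mult_commute_abs)
  then have "h (x + 1 *\<^sub>R (y - x)) - h (x + 0 *\<^sub>R (y - x)) \<ge> D \<bullet> (y - x) * (1 - 0)"
    using convex_on_line[OF assms(1)] by (intro convex_on_imp_above_tangent) auto
  then show ?thesis by simp
qed

lemma convex_critical_point_in_opt_set:
  fixes h :: "'a::real_inner \<Rightarrow> real"
  assumes "convex_on UNIV h" "GDERIV h x :> 0"
  shows "x \<in> opt_set h"
proof -
  have "h x \<le> h y" for y using convex_on_gradient_ineq[OF assms, of y] by simp
  then have "opt_val h = h x" unfolding opt_val_def by (intro cInf_eq_minimum) auto
  then show ?thesis by (simp add: opt_set_def)
qed

theorem theorem3p10:
  fixes h :: "real ^ 'n \<Rightarrow> real" and grad :: "real ^ 'n \<Rightarrow> real ^ 'n"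
  assumes grad: "\<And>x. GDERIV h x :> grad x"
    and grad_cont: "continuous_on UNIV grad"
    and cvx: "convex_on UNIV h"
    and nonempty: "opt_set h \<noteq> {}"
    and KL: "KL_ineq h grad"
  shows "(\<forall>xb. \<exists>\<rho>>0. \<exists>\<delta>>0. \<exists>\<theta>. 0 < \<theta> \<and> \<theta> < 1 \<and>
            (\<forall>x \<in> ball xb \<delta>. (h x - opt_val h) powr \<theta> \<le> \<rho> * norm (grad x)))
       \<and> (\<forall>S. compact S \<longrightarrow> (\<exists>\<theta>S \<rho>S. 0 < \<theta>S \<and> \<theta>S < 1 \<and> \<rho>S > 0 \<and>
            (\<forall>x \<in> S. (h x - opt_val h) powr \<theta>S \<le> \<rho>S * norm (grad x))))"
proof -
  let ?f = "\<lambda>x. h x - opt_val h" and ?g = "\<lambda>x. norm (grad x)"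
  have cont_f: "isCont ?f x" for x
    using grad[of x] unfolding gderiv_def by (intro continuous_intros has_derivative_continuous)
  have KL_at_all: "KL_at ?f ?g x" for x
  proof (cases "grad x = 0")
    case True
    then have "x \<in> opt_set h" using convex_critical_point_in_opt_set[OF cvx] grad[of x] by simp
    then show ?thesis using KL by (simp add: KL_ineq_iff_KL_at)
  next
    case False
    have "isCont ?g x" using grad_cont by (simp add: continuous_on_eq_continuous_at continuous_intros)
    then show ?thesis using cont_f False by (intro KL_at_if_isCont_nonzero) auto
  qed
  have "\<exists>\<theta> \<rho>. 0 < \<theta> \<and> \<theta> < 1 \<and> \<rho> > 0 \<and> (\<forall>x \<in> S. ?f x powr \<theta> \<le> \<rho> * ?g x)"
    if "compact S" for S
    using that cont_f KL_at_all
    by (intro KL_uniform_on_compact) (auto intro: continuous_at_imp_continuous_on)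
  with KL_at_all show ?thesis unfolding KL_at_def by blast
qed

end
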